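(* Let $k\ge 2$ and $G=\Theta(2,2,2k)$ with end vertices $u$ and $v$. Let $m\ge 4$ and let $L$ be an $m$-assignment for $G$ with $L(u)\ne L(v)$. Then $P(G,L)\ge P(G,m)$.
   Context: $\Theta(l_1,l_2,l_3)$ denotes two end vertices joined by three internally disjoint paths of lengths $l_1,l_2,l_3$. An $m$-assignment $L$ assigns to each vertex $w$ a set $L(w)$ of $m$ colors; $P(G,L)$ is the number of proper colorings $f$ of $G$ with $f(w)\in L(w)$ for all $w$. $P(G,m)$ is the chromatic polynomial of $G$. *)

theory Defs
  imports Main
begin

(* Vertices of a theta graph: the two end vertices and internal vertices
   TI i j = j-th internal vertex (1 <= j < l_i) on path i (i in {0,1,2}). *)
datatype tvert = TU | TV | TI nat nat

definition theta_len :: "nat \<Rightarrow> nat \<Rightarrow> nat \<Rightarrow> nat \<Rightarrow> nat" where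
  "theta_len l1 l2 l3 i = (if i = 0 then l1 else if i = 1 then l2 else l3)"

definition theta_verts :: "nat \<Rightarrow> nat \<Rightarrow> nat \<Rightarrow> tvert set" where
  "theta_verts l1 l2 l3 = {TU, TV} \<union>
     {TI i j | i j. i < 3 \<and> 1 \<le> j \<and> j < theta_len l1 l2 l3 i}"

definition theta_pos :: "nat \<Rightarrow> nat \<Rightarrow> nat \<Rightarrow> nat \<Rightarrow> tvert \<Rightarrow> nat option" where
  "theta_pos l1 l2 l3 i x = (case x of
      TU \<Rightarrow> Some 0
    | TV \<Rightarrow> Some (theta_len l1 l2 l3 i)
    | TI i' j \<Rightarrow> (if i' = i \<and> 1 \<le> j \<and> j < theta_len l1 l2 l3 i then Some j else None))"

definition theta_edge :: "nat \<Rightarrow> nat \<Rightarrow> nat \<Rightarrow> tvert \<Rightarrow> tvert \<Rightarrow> bool" where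
  "theta_edge l1 l2 l3 x y = (\<exists>i<3. \<exists>a b. theta_pos l1 l2 l3 i x = Some a \<and>
       theta_pos l1 l2 l3 i y = Some b \<and> (b = a + 1 \<or> a = b + 1))"

(* proper L-colorings of a graph (V,E); functions are fixed to undefined off V
   so that distinct colorings correspond to distinct functions *)
definition list_colorings :: "'v set \<Rightarrow> ('v \<Rightarrow> 'v \<Rightarrow> bool) \<Rightarrow> ('v \<Rightarrow> 'c set) \<Rightarrow> ('v \<Rightarrow> 'c) set" where
  "list_colorings V E L = {f. (\<forall>x\<in>V. f x \<in> L x) \<and>
      (\<forall>x\<in>V. \<forall>y\<in>V. E x y \<longrightarrow> f x \<noteq> f y) \<and> (\<forall>x. x \<notin> V \<longrightarrow> f x = undefined)}"

definition num_list_colorings :: "'v set \<Rightarrow> ('v \<Rightarrow> 'v \<Rightarrow> bool) \<Rightarrow> ('v \<Rightarrow> 'c set) \<Rightarrow> nat" where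
  "num_list_colorings V E L = card (list_colorings V E L)"

definition chrom_poly :: "'v set \<Rightarrow> ('v \<Rightarrow> 'v \<Rightarrow> bool) \<Rightarrow> nat \<Rightarrow> nat" where
  "chrom_poly V E m = card (list_colorings V E (\<lambda>_. {0..<m::nat}))"

definition is_m_assignment :: "'v set \<Rightarrow> nat \<Rightarrow> ('v \<Rightarrow> 'c set) \<Rightarrow> bool" where
  "is_m_assignment V m L = (\<forall>x\<in>V. finite (L x) \<and> card (L x) = m)"

end

theory Submission
  imports Defs
begin

text \<open>
  Sorting the L-colourings of \<open>\<Theta>(2,2,n)\<close> by the colours c, d of the end vertices gives
  \<open>P(G,L) = \<Sum>\<^sub>c\<^sub>,\<^sub>d |L(a) - {c,d}| |L(b) - {c,d}| Q(c,d)\<close>, where a, b are the middle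
  vertices of the short paths and \<open>Q(c,d)\<close> counts the L-colourings of the long path with
  ends precoloured c and d. For complete lists \<open>Q(c,d)\<close> is \<open>D\<^sub>n = ((m-1)\<^sup>n - 1)/m\<close> if
  \<open>c \<noteq> d\<close> and \<open>D\<^sub>n + 1\<close> if \<open>c = d\<close> (n even), which yields \<open>P(G,m)\<close> exactly. For arbitrary
  m-lists, \<open>Q(c,d) \<ge> D\<^sub>n\<close> follows by induction along the path from bounds on sums of
  \<open>Q(c,d)\<close> over sets of colours c. Double counting and \<open>L(u) \<noteq> L(v)\<close> give
  \<open>\<Sum>\<^sub>c\<^sub>,\<^sub>d |L(a) - {c,d}| \<ge> m(m-1)\<^sup>2 + m - 1\<close>, which bounds the sum of the products.
  What remains is a polynomial inequality in m and \<open>D\<^sub>n \<ge> (m-1)\<^sup>2(m-2)\<close>, valid for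
  \<open>m \<ge> 4\<close>.
\<close>

section \<open>List colourings of paths\<close>

definition path_colorings :: "'c \<Rightarrow> 'c \<Rightarrow> 'c set list \<Rightarrow> 'c list set" where
  "path_colorings c d Ls = {xs. list_all2 (\<in>) xs Ls \<and> distinct_adj (c # xs @ [d])}"

lemma finite_path_colorings:
  assumes "\<forall>L\<in>set Ls. finite L"
  shows "finite (path_colorings c d Ls)"
proof (rule finite_subset)
  show "path_colorings c d Ls \<subseteq> {xs. set xs \<subseteq> \<Union>(set Ls) \<and> length xs = length Ls}"
    by (fastforce simp: path_colorings_def list_all2_conv_all_nth in_set_conv_nth)
  show "finite {xs. set xs \<subseteq> \<Union>(set Ls) \<and> length xs = length Ls}"
    using assms by (intro finite_lists_length_eq) auto
qed

lemma path_colorings_Nil: "path_colorings c d [] = (if c = d then {} else {[]})"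
  by (auto simp: path_colorings_def)

lemma path_colorings_Cons:
  "path_colorings c d (L # Ls) = (\<lambda>(x, xs). x # xs) ` (SIGMA x:L - {c}. path_colorings x d Ls)"
  by (auto simp: path_colorings_def list_all2_Cons2 image_iff)

lemma card_path_colorings_Cons:
  assumes "finite L" "\<forall>L\<in>set Ls. finite L"
  shows "card (path_colorings c d (L # Ls)) = (\<Sum>x\<in>L - {c}. card (path_colorings x d Ls))"
proof -
  have "card (path_colorings c d (L # Ls)) = card (SIGMA x:L - {c}. path_colorings x d Ls)"
    unfolding path_colorings_Cons by (rule card_image) (auto simp: inj_on_def)
  also have "\<dots> = (\<Sum>x\<in>L - {c}. card (path_colorings x d Ls))"
    using assms by (intro card_SigmaI) (auto intro: finite_path_colorings)
  finally show ?thesis .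
qed

text \<open>The number of proper m-colourings of a path with n edges whose two ends carry two
  prescribed distinct colours.\<close>

fun distinct_ends_count :: "int \<Rightarrow> nat \<Rightarrow> int" where
  "distinct_ends_count m 0 = 0"
| "distinct_ends_count m (Suc n) = (m - 1) ^ n - distinct_ends_count m n"

lemma distinct_ends_count_closed_form:
  "m * distinct_ends_count m n = (m - 1) ^ n - (-1) ^ n"
  by (induction n) (auto simp: algebra_simps)

lemma distinct_ends_count_Suc':
  "distinct_ends_count m (Suc n) = (m - 1) * distinct_ends_count m n + (-1) ^ n"
  by (induction n) (auto simp: algebra_simps)

declare distinct_ends_count.simps(2) [simp del]

lemma distinct_ends_count_nonneg:
  assumes "m \<ge> 2"
  shows "0 \<le> distinct_ends_count m n"
proof -
  have "(-1) ^ n \<le> (1::int)"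
    by (cases "even n") auto
  moreover have "1 \<le> (m - 1) ^ n"
    using assms by simp
  ultimately have "0 \<le> m * distinct_ends_count m n"
    unfolding distinct_ends_count_closed_form by linarith
  then show ?thesis
    using assms by (simp add: zero_le_mult_iff)
qed

lemma distinct_ends_count_lower:
  assumes "m \<ge> 2" "j + 2 \<le> n"
  shows "(m - 1) ^ j * (m - 2) \<le> distinct_ends_count m n"
proof -
  define i where "i = n - 2"
  have n: "n = i + 2"
    using assms(2) by (simp add: i_def)
  have "(m - 1) ^ j * (m - 2) \<le> (m - 1) ^ i * (m - 2)"
    using assms n by (intro mult_right_mono power_increasing) auto
  also have "\<dots> \<le> (m - 1) ^ i * (m - 2) + distinct_ends_count m i"
    using distinct_ends_count_nonneg [OF assms(1)] by simp
  also have "\<dots> = distinct_ends_count m n"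
    unfolding n by (simp add: distinct_ends_count.simps(2) algebra_simps)
  finally show ?thesis .
qed

lemma sum_sum_Diff_singleton:
  fixes q :: "'a \<Rightarrow> 'b :: comm_ring_1"
  assumes "finite L" "finite Y"
  shows "(\<Sum>c\<in>Y. \<Sum>x\<in>L - {c}. q x) = (of_nat (card Y) - 1) * sum q L + sum q (L - Y)"
proof -
  have "(\<Sum>c\<in>Y. \<Sum>x\<in>L - {c}. q x) = (\<Sum>c\<in>Y. sum q L - (if c \<in> L then q c else 0))"
    using assms by (intro sum.cong) (auto simp: sum_diff1)
  also have "\<dots> = of_nat (card Y) * sum q L - sum q (L \<inter> Y)"
    using assms by (simp add: sum_subtractf sum.If_cases Int_commute)
  finally have "(\<Sum>c\<in>Y. \<Sum>x\<in>L - {c}. q x) = of_nat (card Y) * sum q L - sum q (L \<inter> Y)" .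
  moreover have "sum q L = sum q (L \<inter> Y) + sum q (L - Y)"
    using assms by (metis sum.Int_Diff)
  ultimately show ?thesis
    by (simp add: algebra_simps)
qed

text \<open>For \<open>q c\<close> the number of colourings of a path with n edges from colour \<open>c\<close> to a fixed
  colour, only the case \<open>card Y = 1\<close> of the second clause is wanted in the end; the bounds over
  all colour sets \<open>Y\<close> are what survives the induction step \<open>q \<mapsto> (\<lambda>c. \<Sum>x\<in>L - {c}. q x)\<close>.\<close>

definition colour_sum_bounds :: "nat \<Rightarrow> nat \<Rightarrow> ('c \<Rightarrow> int) \<Rightarrow> bool" where
  "colour_sum_bounds m n q \<longleftrightarrow>
     (\<forall>Y. finite Y \<and> card Y = m \<longrightarrow> (int m - 1) ^ n \<le> sum q Y) \<and>
     (\<forall>Y. finite Y \<and> 0 < card Y \<and> card Y < m \<longrightarrow>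
        int (card Y) * distinct_ends_count (int m) n \<le> sum q Y + of_bool (odd n))"

lemma colour_sum_bounds_base: "colour_sum_bounds m 1 (\<lambda>c. of_bool (c \<noteq> d))"
proof -
  have "int (card Y) - 1 \<le> (\<Sum>c\<in>Y. of_bool (c \<noteq> d))" if "finite Y" for Y :: "'a set"
  proof -
    have "Y \<inter> {c. c \<noteq> d} = Y - {d}"
      by auto
    then show ?thesis
      using that by (cases "d \<in> Y") (auto simp: card_Diff_singleton_if card_gt_0_iff of_nat_diff)
  qed
  then show ?thesis
    by (fastforce simp: colour_sum_bounds_def distinct_ends_count.simps(2))
qed

lemma colour_sum_bounds_Diff:
  assumes m: "m \<ge> 2" and L: "finite L" "card L = m" and bounds: "colour_sum_bounds m n q"
    and Y: "finite Y" "card Y < m"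
  shows "(int m - int (card Y)) * distinct_ends_count (int m) n - of_bool (odd n) \<le> sum q (L - Y)"
proof -
  let ?D = "distinct_ends_count (int m) n"
  have D: "0 \<le> ?D"
    using distinct_ends_count_nonneg m by simp
  have W: "m - card Y \<le> card (L - Y)"
    using diff_card_le_card_Diff [OF Y(1), of L] L(2) by simp
  show ?thesis
  proof (cases "card (L - Y) < m")
    case True
    have "(int m - int (card Y)) * ?D \<le> int (card (L - Y)) * ?D"
      using D W Y(2) by (intro mult_right_mono) auto
    also have "\<dots> \<le> sum q (L - Y) + of_bool (odd n)"
      using bounds True L W Y unfolding colour_sum_bounds_def by simp
    finally show ?thesis
      by simp
  next
    case False
    then have "L - Y = L"
      using L by (metis Diff_subset card_mono card_subset_eq le_neq_implies_less)
    then have "(int m - 1) ^ n \<le> sum q (L - Y)"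
      using bounds L unfolding colour_sum_bounds_def by simp
    moreover have "(int m - int (card Y)) * ?D \<le> int m * ?D"
      using D by (simp add: mult_right_mono)
    moreover have "int m * ?D + of_bool (odd (Suc n)) = (int m - 1) ^ n + of_bool (odd n)"
      using distinct_ends_count_closed_form [of "int m" n] by auto
    ultimately show ?thesis
      by (cases "even n") auto
  qed
qed

lemma colour_sum_bounds_step:
  assumes m: "m \<ge> 2" and L: "finite L" "card L = m" and q: "\<And>c. 0 \<le> q c"
    and bounds: "colour_sum_bounds m n q"
  shows "colour_sum_bounds m (Suc n) (\<lambda>c. \<Sum>x\<in>L - {c}. q x)"
proof -
  let ?X = "(int m - 1) ^ n" and ?D = "distinct_ends_count (int m) n"
  have split: "(\<Sum>c\<in>Y. \<Sum>x\<in>L - {c}. q x) = (int (card Y) - 1) * sum q L + sum q (L - Y)"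
    if "finite Y" for Y
    using sum_sum_Diff_singleton [OF L(1) that] by simp
  have S: "?X \<le> sum q L"
    using bounds L unfolding colour_sum_bounds_def by simp
  show ?thesis
    unfolding colour_sum_bounds_def
  proof (intro conjI allI impI; elim conjE)
    fix Y :: "'a set" assume Y: "finite Y" "card Y = m"
    have "(int m - 1) * ?X \<le> (int m - 1) * sum q L"
      using S m by (intro mult_left_mono) auto
    also have "\<dots> \<le> (\<Sum>c\<in>Y. \<Sum>x\<in>L - {c}. q x)"
      using split [OF Y(1)] Y(2) sum_nonneg [of "L - Y" q] q by simp
    finally show "(int m - 1) ^ Suc n \<le> (\<Sum>c\<in>Y. \<Sum>x\<in>L - {c}. q x)"
      by simp
  next
    fix Y :: "'a set" assume Y: "finite Y" "0 < card Y" "card Y < m"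
    let ?r = "int (card Y)"
    have "(?r - 1) * ?X \<le> (?r - 1) * sum q L"
      using S Y(2) by (intro mult_left_mono) auto
    moreover have "?r * distinct_ends_count (int m) (Suc n)
        = (?r - 1) * ?X + (int m - ?r) * ?D - of_bool (odd n) + of_bool (odd (Suc n))"
      using distinct_ends_count_closed_form [of "int m" n]
      by (auto simp: distinct_ends_count.simps(2) algebra_simps)
    ultimately show "?r * distinct_ends_count (int m) (Suc n)
        \<le> (\<Sum>c\<in>Y. \<Sum>x\<in>L - {c}. q x) + of_bool (odd (Suc n))"
      using split [OF Y(1)] colour_sum_bounds_Diff [OF m L bounds Y(1,3)] by linarith
  qed
qed

lemma colour_sum_bounds_path_colorings:
  assumes "m \<ge> 2" "\<forall>L\<in>set Ls. finite L \<and> card L = m"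
  shows "colour_sum_bounds m (Suc (length Ls)) (\<lambda>c. int (card (path_colorings c d Ls)))"
  using assms(2)
proof (induction Ls)
  case Nil
  have "int (card (path_colorings c d [])) = of_bool (c \<noteq> d)" for c
    by (simp add: path_colorings_Nil)
  then show ?case
    using colour_sum_bounds_base by simp
next
  case (Cons L Ls)
  then have "colour_sum_bounds m (Suc (Suc (length Ls)))
      (\<lambda>c. \<Sum>x\<in>L - {c}. int (card (path_colorings x d Ls)))"
    using assms(1) by (intro colour_sum_bounds_step) auto
  then show ?case
    using Cons.prems by (simp add: card_path_colorings_Cons)
qed

lemma distinct_ends_count_le_card_path_colorings:
  assumes "m \<ge> 2" "\<forall>L\<in>set Ls. finite L \<and> card L = m" "odd (length Ls)"
  shows "distinct_ends_count (int m) (Suc (length Ls)) \<le> int (card (path_colorings c d Ls))"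
  using colour_sum_bounds_path_colorings [OF assms(1,2), of d] assms(1,3)
  unfolding colour_sum_bounds_def by (auto dest: spec [of _ "{c}"])

lemma card_path_colorings_replicate:
  assumes "finite F" "c \<in> F" "d \<in> F"
  shows "int (card (path_colorings c d (replicate k F)))
    = distinct_ends_count (int (card F)) (Suc k) + (if c = d then (-1) ^ Suc k else 0)"
  using assms(2)
proof (induction k arbitrary: c)
  case 0
  then show ?case
    by (simp add: path_colorings_Nil distinct_ends_count.simps(2))
next
  case (Suc k)
  let ?D = "distinct_ends_count (int (card F)) (Suc k)" and ?s = "(-1::int) ^ Suc k"
  have "int (card (path_colorings c d (replicate (Suc k) F)))
      = (\<Sum>x\<in>F - {c}. int (card (path_colorings x d (replicate k F))))"
    using assms(1) by (simp add: card_path_colorings_Cons)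
  also have "\<dots> = (\<Sum>x\<in>F - {c}. ?D + (if x = d then ?s else 0))"
    using Suc.IH by (intro sum.cong) auto
  also have "\<dots> = (int (card F) - 1) * ?D + (if c = d then 0 else ?s)"
    using assms Suc.prems card_Diff_singleton_if [of F c] card_gt_0_iff [of F]
    by (auto simp: sum.distrib of_nat_diff algebra_simps)
  also have "\<dots> = distinct_ends_count (int (card F)) (Suc (Suc k))
      + (if c = d then (-1) ^ Suc (Suc k) else 0)"
    by (simp add: distinct_ends_count_Suc')
  finally show ?case .
qed

section \<open>Theta graphs\<close>

definition theta_path_vertex :: "nat \<Rightarrow> nat \<Rightarrow> nat \<Rightarrow> nat \<Rightarrow> nat \<Rightarrow> tvert" where
  "theta_path_vertex l1 l2 l3 i a =
     (if a = 0 then TU else if a = theta_len l1 l2 l3 i then TV else TI i a)"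

lemma theta_pos_eq_Some_iff:
  assumes "0 < theta_len l1 l2 l3 i"
  shows "theta_pos l1 l2 l3 i x = Some a
    \<longleftrightarrow> a \<le> theta_len l1 l2 l3 i \<and> x = theta_path_vertex l1 l2 l3 i a"
  using assms by (cases x) (auto simp: theta_pos_def theta_path_vertex_def)

lemma theta_edge_iff:
  assumes "\<forall>i<3. 0 < theta_len l1 l2 l3 i"
  shows "theta_edge l1 l2 l3 x y \<longleftrightarrow> (\<exists>i<3. \<exists>a<theta_len l1 l2 l3 i.
    {x, y} = {theta_path_vertex l1 l2 l3 i a, theta_path_vertex l1 l2 l3 i (Suc a)})"
proof -
  let ?l = "theta_len l1 l2 l3" and ?p = "theta_path_vertex l1 l2 l3"
  have "theta_edge l1 l2 l3 x y \<longleftrightarrow> (\<exists>i<3. \<exists>a b. a \<le> ?l i \<and> x = ?p i a \<and>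
      b \<le> ?l i \<and> y = ?p i b \<and> (b = Suc a \<or> a = Suc b))"
    using assms unfolding theta_edge_def by (simp add: theta_pos_eq_Some_iff cong: conj_cong)
  also have "\<dots> \<longleftrightarrow> (\<exists>i<3. \<exists>a<?l i. {x, y} = {?p i a, ?p i (Suc a)})"
    by (auto simp: doubleton_eq_iff Suc_le_eq) (blast intro: less_imp_le Suc_leI)+
  finally show ?thesis .
qed

lemma theta_path_vertex_in_verts:
  assumes "i < 3" "a \<le> theta_len l1 l2 l3 i"
  shows "theta_path_vertex l1 l2 l3 i a \<in> theta_verts l1 l2 l3"
  using assms by (auto simp: theta_path_vertex_def theta_verts_def)

lemma theta_proper_iff:
  assumes "\<forall>i<3. 0 < theta_len l1 l2 l3 i"
  shows "(\<forall>x\<in>theta_verts l1 l2 l3. \<forall>y\<in>theta_verts l1 l2 l3. theta_edge l1 l2 l3 x y \<longrightarrow> f x \<noteq> f y)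
    \<longleftrightarrow> (\<forall>i<3. distinct_adj
          (map (f \<circ> theta_path_vertex l1 l2 l3 i) [0..<Suc (theta_len l1 l2 l3 i)]))"
    (is "?proper \<longleftrightarrow> _")
proof -
  let ?l = "theta_len l1 l2 l3" and ?p = "theta_path_vertex l1 l2 l3"
  have "?proper \<longleftrightarrow> (\<forall>i<3. \<forall>a<?l i. f (?p i a) \<noteq> f (?p i (Suc a)))"
  proof
    assume ?proper
    show "\<forall>i<3. \<forall>a<?l i. f (?p i a) \<noteq> f (?p i (Suc a))"
    proof (intro allI impI)
      fix i a assume "i < 3" "a < ?l i"
      then have "?p i a \<in> theta_verts l1 l2 l3" "?p i (Suc a) \<in> theta_verts l1 l2 l3"
        and "theta_edge l1 l2 l3 (?p i a) (?p i (Suc a))"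
        using theta_edge_iff [OF assms] by (auto intro!: theta_path_vertex_in_verts)
      then show "f (?p i a) \<noteq> f (?p i (Suc a))"
        using \<open>?proper\<close> by blast
    qed
  qed (auto simp: theta_edge_iff [OF assms] doubleton_eq_iff, metis)
  also have "\<dots> \<longleftrightarrow> (\<forall>i<3. distinct_adj (map (f \<circ> ?p i) [0..<Suc (?l i)]))"
    by (simp add: distinct_adj_conv_nth nth_map_upt del: upt_Suc)
  finally show ?thesis .
qed

section \<open>Counting the colourings of \<open>\<Theta>(2,2,n)\<close>\<close>

lemma theta_verts_2_2: "theta_verts 2 2 n = {TU, TV, TI 0 1, TI 1 1} \<union> TI 2 ` {1..<n}"
  by (auto simp: theta_verts_def theta_len_def eval_nat_numeral less_Suc_eq)

lemma theta_2_2_path_vertices: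
  assumes "n \<ge> 1"
  shows "map (f \<circ> theta_path_vertex 2 2 n 2) [0..<Suc (theta_len 2 2 n 2)]
    = f TU # map (f \<circ> TI 2) [1..<n] @ [f TV]"
proof -
  have "[0..<Suc n] = 0 # [1..<n] @ [n]"
    using assms by (simp add: upt_conv_Cons)
  then show ?thesis
    using assms by (simp add: theta_path_vertex_def theta_len_def)
qed

lemma theta_2_2_proper_iff:
  assumes "n \<ge> 1"
  shows "(\<forall>x\<in>theta_verts 2 2 n. \<forall>y\<in>theta_verts 2 2 n. theta_edge 2 2 n x y \<longrightarrow> f x \<noteq> f y)
    \<longleftrightarrow> f (TI 0 1) \<notin> {f TU, f TV} \<and> f (TI 1 1) \<notin> {f TU, f TV}
        \<and> distinct_adj (f TU # map (f \<circ> TI 2) [1..<n] @ [f TV])"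
proof -
  have len: "\<forall>i<3. 0 < theta_len 2 2 n i"
    using assms by (simp add: theta_len_def)
  have all3: "(\<forall>i<3. P i) \<longleftrightarrow> P 0 \<and> P 1 \<and> P 2" for P :: "nat \<Rightarrow> bool"
    by (auto simp: eval_nat_numeral less_Suc_eq)
  have path01: "map (f \<circ> theta_path_vertex 2 2 n 0) [0..<Suc (theta_len 2 2 n 0)] = [f TU, f (TI 0 1), f TV]"
    "map (f \<circ> theta_path_vertex 2 2 n 1) [0..<Suc (theta_len 2 2 n 1)] = [f TU, f (TI 1 1), f TV]"
    by (simp_all add: theta_path_vertex_def theta_len_def eval_nat_numeral)
  show ?thesis
    unfolding theta_proper_iff [OF len] all3 path01 theta_2_2_path_vertices [OF assms] by auto
qed

definition theta_2_2_tuple :: "nat \<Rightarrow> (tvert \<Rightarrow> 'c) \<Rightarrow> 'c \<times> 'c \<times> 'c \<times> 'c \<times> 'c list" where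
  "theta_2_2_tuple n f = (f TU, f TV, f (TI 0 1), f (TI 1 1), map (f \<circ> TI 2) [1..<n])"

definition theta_2_2_tuples ::
    "nat \<Rightarrow> (tvert \<Rightarrow> 'c set) \<Rightarrow> ('c \<times> 'c \<times> 'c \<times> 'c \<times> 'c list) set" where
  "theta_2_2_tuples n L = (SIGMA c:L TU. SIGMA d:L TV.
     (L (TI 0 1) - {c, d}) \<times> (L (TI 1 1) - {c, d}) \<times> path_colorings c d (map (L \<circ> TI 2) [1..<n]))"

lemma list_colorings_theta_2_2_iff:
  assumes "n \<ge> 1"
  shows "f \<in> list_colorings (theta_verts 2 2 n) (theta_edge 2 2 n) L \<longleftrightarrow>
    (\<forall>x. x \<notin> theta_verts 2 2 n \<longrightarrow> f x = undefined) \<and> theta_2_2_tuple n f \<in> theta_2_2_tuples n L"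
  unfolding list_colorings_def theta_2_2_proper_iff [OF assms]
  by (auto simp: theta_verts_2_2 theta_2_2_tuple_def theta_2_2_tuples_def path_colorings_def
      list_all2_map1 list_all2_map2 list_all2_same)

lemma inj_on_theta_2_2_tuple:
  "inj_on (theta_2_2_tuple n) {f. \<forall>x. x \<notin> theta_verts 2 2 n \<longrightarrow> f x = undefined}"
proof (rule inj_onI, rule ext)
  fix f g x
  assume "f \<in> {f. \<forall>x. x \<notin> theta_verts 2 2 n \<longrightarrow> f x = undefined}"
    and "g \<in> {f. \<forall>x. x \<notin> theta_verts 2 2 n \<longrightarrow> f x = undefined}"
    and "theta_2_2_tuple n f = theta_2_2_tuple n g"
  then show "f x = g x"
    by (cases "x \<in> theta_verts 2 2 n") (auto simp: theta_verts_2_2 theta_2_2_tuple_def)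
qed

lemma theta_2_2_tuple_exists:
  assumes "length xs = n - 1"
  shows "\<exists>f. (\<forall>x. x \<notin> theta_verts 2 2 n \<longrightarrow> f x = undefined) \<and> theta_2_2_tuple n f = (c, d, a, b, xs)"
proof -
  define f where "f x = (if x \<in> theta_verts 2 2 n then (case x of TU \<Rightarrow> c | TV \<Rightarrow> d
    | TI i j \<Rightarrow> if i = 0 then a else if i = 1 then b else xs ! (j - 1)) else undefined)" for x
  have "map (f \<circ> TI 2) [1..<n] = xs"
    using assms by (intro nth_equalityI) (auto simp: f_def theta_verts_2_2 nth_map_upt)
  then have "theta_2_2_tuple n f = (c, d, a, b, xs)"
    unfolding theta_2_2_tuple_def by (simp add: f_def theta_verts_2_2)
  moreover have "\<forall>x. x \<notin> theta_verts 2 2 n \<longrightarrow> f x = undefined"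
    by (simp add: f_def)
  ultimately show ?thesis
    by blast
qed

lemma bij_betw_theta_2_2_tuple:
  assumes "n \<ge> 1"
  shows "bij_betw (theta_2_2_tuple n) (list_colorings (theta_verts 2 2 n) (theta_edge 2 2 n) L)
    (theta_2_2_tuples n L)"
proof (rule bij_betw_imageI)
  show "inj_on (theta_2_2_tuple n) (list_colorings (theta_verts 2 2 n) (theta_edge 2 2 n) L)"
    by (rule inj_on_subset [OF inj_on_theta_2_2_tuple]) (auto simp: list_colorings_def)
  show "theta_2_2_tuple n ` list_colorings (theta_verts 2 2 n) (theta_edge 2 2 n) L = theta_2_2_tuples n L"
  proof (intro equalityI subsetI)
    fix t assume "t \<in> theta_2_2_tuples n L"
    moreover obtain c d a b xs where t: "t = (c, d, a, b, xs)"
      by (cases t) auto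
    ultimately have "length xs = n - 1"
      by (auto simp: theta_2_2_tuples_def path_colorings_def dest: list_all2_lengthD)
    then show "t \<in> theta_2_2_tuple n ` list_colorings (theta_verts 2 2 n) (theta_edge 2 2 n) L"
      using theta_2_2_tuple_exists \<open>t \<in> theta_2_2_tuples n L\<close> t
        list_colorings_theta_2_2_iff [OF assms] by (metis image_eqI)
  qed (use list_colorings_theta_2_2_iff [OF assms] in blast)
qed

lemma card_list_colorings_theta_2_2:
  assumes "n \<ge> 1" "\<forall>x\<in>theta_verts 2 2 n. finite (L x)"
  shows "card (list_colorings (theta_verts 2 2 n) (theta_edge 2 2 n) L) =
    (\<Sum>c\<in>L TU. \<Sum>d\<in>L TV. card (L (TI 0 1) - {c, d}) * card (L (TI 1 1) - {c, d})
       * card (path_colorings c d (map (L \<circ> TI 2) [1..<n])))"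
proof -
  have "finite (L TU)" "finite (L TV)" "finite (L (TI 0 1))" "finite (L (TI 1 1))"
    and "\<forall>A\<in>set (map (L \<circ> TI 2) [1..<n]). finite A"
    using assms(2) by (auto simp: theta_verts_2_2)
  then have "card (theta_2_2_tuples n L) = (\<Sum>c\<in>L TU. \<Sum>d\<in>L TV. card (L (TI 0 1) - {c, d})
      * card (L (TI 1 1) - {c, d}) * card (path_colorings c d (map (L \<circ> TI 2) [1..<n])))"
    unfolding theta_2_2_tuples_def
    by (simp add: card_SigmaI card_cartesian_product finite_SigmaI finite_path_colorings mult.assoc)
  then show ?thesis
    using bij_betw_same_card [OF bij_betw_theta_2_2_tuple [OF assms(1), of L]] by presburger
qed

lemma chrom_poly_theta_2_2:
  assumes "n \<ge> 1"
  shows "int (chrom_poly (theta_verts 2 2 n) (theta_edge 2 2 n) m)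
    = int m * ((int m - 1)^2 * (distinct_ends_count (int m) n + (-1) ^ n)
        + (int m - 1) * (int m - 2)^2 * distinct_ends_count (int m) n)"
proof -
  let ?F = "{0..<m}" and ?D = "distinct_ends_count (int m) n"
  let ?A = "(int m - 1)^2 * (?D + (-1) ^ n)" and ?B = "(int m - 2)^2 * ?D"
  have entry: "int (card (?F - {c, d}) * card (?F - {c, d})
      * card (path_colorings c d (map ((\<lambda>_. ?F) \<circ> TI 2) [1..<n]))) = (if c = d then ?A else ?B)"
    if "c \<in> ?F" "d \<in> ?F" for c d
  proof -
    have "map ((\<lambda>_. ?F) \<circ> TI 2) [1..<n] = replicate (n - 1) ?F"
      by (simp add: comp_def map_replicate_const)
    then have "int (card (path_colorings c d (map ((\<lambda>_. ?F) \<circ> TI 2) [1..<n])))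
        = ?D + (if c = d then (-1) ^ n else 0)"
      using card_path_colorings_replicate [of ?F c d "n - 1"] that assms by simp
    moreover have "int (card (?F - {c, d})) = (if c = d then int m - 1 else int m - 2)"
      using that by (auto simp: card_Diff_subset of_nat_diff)
    ultimately show ?thesis
      by (simp add: power2_eq_square)
  qed
  have fin: "\<forall>x\<in>theta_verts 2 2 n. finite ((\<lambda>_. ?F) x)"
    by simp
  have row: "(\<Sum>d\<in>?F. if c = d then ?A else ?B) = ?A + (int m - 1) * ?B" if "c \<in> ?F" for c
  proof -
    have "(\<Sum>d\<in>?F. if c = d then ?A else ?B) = (\<Sum>d\<in>?F. ?B + (if c = d then ?A - ?B else 0))"
      by (intro sum.cong) auto
    also have "\<dots> = int m * ?B + (?A - ?B)"
      using that by (simp add: sum.distrib)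
    finally show ?thesis
      by (simp add: algebra_simps)
  qed
  have "int (chrom_poly (theta_verts 2 2 n) (theta_edge 2 2 n) m)
      = (\<Sum>c\<in>?F. \<Sum>d\<in>?F. if c = d then ?A else ?B)"
    unfolding chrom_poly_def card_list_colorings_theta_2_2 [OF assms fin] of_nat_sum
    using entry by (intro sum.cong) auto
  also have "\<dots> = int m * (?A + (int m - 1) * ?B)"
    using row by simp
  finally show ?thesis
    by (simp add: algebra_simps)
qed

section \<open>Lower bound for \<open>P(G,L)\<close>\<close>

lemma sum_card_Diff_doubleton_eq:
  assumes "finite Lu" "finite Lv" "finite La"
  shows "(\<Sum>c\<in>Lu. \<Sum>d\<in>Lv. card (La - {c, d})) = (\<Sum>x\<in>La. card (Lu - {x}) * card (Lv - {x}))"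
proof -
  have card_eq: "card (A - B) = (\<Sum>x\<in>A. of_bool (x \<notin> B))" if "finite A" for A B :: "'a set"
  proof -
    have "A - B = A \<inter> {x. x \<notin> B}"
      by auto
    then show ?thesis
      using that by simp
  qed
  have "card (La - {c, d}) = (\<Sum>x\<in>La. of_bool (c \<notin> {x}) * of_bool (d \<notin> {x}))" for c d
    unfolding card_eq [OF assms(3)] by (intro sum.cong) auto
  then have "(\<Sum>c\<in>Lu. \<Sum>d\<in>Lv. card (La - {c, d}))
      = (\<Sum>c\<in>Lu. \<Sum>d\<in>Lv. \<Sum>x\<in>La. of_bool (c \<notin> {x}) * of_bool (d \<notin> {x}))"
    by simp
  also have "\<dots> = (\<Sum>c\<in>Lu. \<Sum>x\<in>La. \<Sum>d\<in>Lv. of_bool (c \<notin> {x}) * of_bool (d \<notin> {x}))"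
    by (rule sum.cong [OF refl], rule sum.swap)
  also have "\<dots> = (\<Sum>x\<in>La. \<Sum>c\<in>Lu. \<Sum>d\<in>Lv. of_bool (c \<notin> {x}) * of_bool (d \<notin> {x}))"
    by (rule sum.swap)
  also have "\<dots> = (\<Sum>x\<in>La. card (Lu - {x}) * card (Lv - {x}))"
    by (simp only: card_eq [OF assms(1)] card_eq [OF assms(2)] sum_product)
  finally show ?thesis .
qed

lemma sum_card_Diff_doubleton_lower:
  assumes fin: "finite Lu" "finite Lv" "finite La" and card: "card Lu = m" "card Lv = m" "card La = m"
    and "Lu \<noteq> Lv"
  shows "m * (m - 1)^2 + (m - 1) \<le> (\<Sum>c\<in>Lu. \<Sum>d\<in>Lv. card (La - {c, d}))"
proof -
  let ?t = "\<lambda>x. card (Lu - {x}) * card (Lv - {x})"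
  have "\<not> Lu \<subseteq> Lv"
    using fin card \<open>Lu \<noteq> Lv\<close> card_subset_eq by metis
  then have "card (Lu \<inter> Lv) < m"
    using fin card by (metis Int_lower1 inf.absorb_iff1 psubsetI psubset_card_mono)
  then obtain x0 where x0: "x0 \<in> La" "x0 \<notin> Lu \<inter> Lv"
    using fin card card_mono [of "Lu \<inter> Lv" La] by (metis finite_Int not_le subsetI)
  have minus1: "m - 1 \<le> card (A - {x})" if "card A = m" for A :: "'a set" and x
    using that by (simp add: card_Diff_singleton_if)
  have "m * (m - 1) \<le> ?t x0"
    using x0 card minus1 by (auto simp: mult_le_mono mult.commute)
  moreover have "(m - 1) * ((m - 1) * (m - 1)) \<le> (\<Sum>x\<in>La - {x0}. ?t x)"
    using sum_bounded_below [of "La - {x0}" "(m - 1) * (m - 1)" ?t] x0 fin card minus1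
    by (simp add: mult_le_mono)
  moreover have "(\<Sum>x\<in>La. ?t x) = ?t x0 + (\<Sum>x\<in>La - {x0}. ?t x)"
    using fin x0 by (simp add: sum.remove)
  moreover have "m * (m - 1) + (m - 1) * ((m - 1) * (m - 1)) = m * (m - 1)^2 + (m - 1)"
    by (cases m) (auto simp: algebra_simps power2_eq_square)
  ultimately show ?thesis
    using sum_card_Diff_doubleton_eq [OF fin] by linarith
qed

lemma sum_card_Diff_doubleton_product_lower:
  assumes fin: "finite Lu" "finite Lv" "finite La" "finite Lb"
    and card: "card Lu = m" "card Lv = m" "card La = m" "card Lb = m"
    and "2 \<le> m" "Lu \<noteq> Lv"
  shows "(int m - 2) * (int m ^ 3 - 2 * int m ^ 2 + 4 * int m - 2)
    \<le> (\<Sum>c\<in>Lu. \<Sum>d\<in>Lv. int (card (La - {c, d}) * card (Lb - {c, d})))"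
proof -
  let ?k = "int m - 2" and ?a = "\<lambda>c d. int (card (La - {c, d}))" and ?b = "\<lambda>c d. int (card (Lb - {c, d}))"
  have ge: "?k \<le> int (card (A - {c, d}))" if "finite A" "card A = m" for A :: "'a set" and c d
  proof -
    have "card {c, d} \<le> 2"
      by (simp add: card_insert_le_m1)
    then have "m - 2 \<le> card (A - {c, d})"
      using diff_card_le_card_Diff [of "{c, d}" A] that by simp
    then show ?thesis
      by linarith
  qed
  have "?k * (?a c d + ?b c d) - ?k^2 \<le> int (card (La - {c, d}) * card (Lb - {c, d}))" for c d
  proof -
    have "0 \<le> (?a c d - ?k) * (?b c d - ?k)"
      using ge fin card by simp
    then show ?thesis
      by (simp add: algebra_simps power2_eq_square)
  qed
  then have "(\<Sum>c\<in>Lu. \<Sum>d\<in>Lv. ?k * (?a c d + ?b c d) - ?k^2)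
      \<le> (\<Sum>c\<in>Lu. \<Sum>d\<in>Lv. int (card (La - {c, d}) * card (Lb - {c, d})))"
    by (intro sum_mono)
  moreover have "(\<Sum>c\<in>Lu. \<Sum>d\<in>Lv. ?k * (?a c d + ?b c d) - ?k^2)
      = ?k * ((\<Sum>c\<in>Lu. \<Sum>d\<in>Lv. ?a c d) + (\<Sum>c\<in>Lu. \<Sum>d\<in>Lv. ?b c d)) - int m * int m * ?k^2"
    using card by (simp add: sum_subtractf sum.distrib sum_distrib_left distrib_left)
  moreover have "int (m * (m - 1)^2 + (m - 1)) \<le> (\<Sum>c\<in>Lu. \<Sum>d\<in>Lv. ?a c d)"
    and "int (m * (m - 1)^2 + (m - 1)) \<le> (\<Sum>c\<in>Lu. \<Sum>d\<in>Lv. ?b c d)"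
    using sum_card_Diff_doubleton_lower [OF fin(1-3) card(1-3) \<open>Lu \<noteq> Lv\<close>]
      sum_card_Diff_doubleton_lower [OF fin(1,2,4) card(1,2,4) \<open>Lu \<noteq> Lv\<close>]
    unfolding of_nat_sum [symmetric] of_nat_le_iff by simp_all
  then have "?k * (2 * (int m * (int m - 1)^2 + int m - 1))
      \<le> ?k * ((\<Sum>c\<in>Lu. \<Sum>d\<in>Lv. ?a c d) + (\<Sum>c\<in>Lu. \<Sum>d\<in>Lv. ?b c d))"
    using \<open>2 \<le> m\<close> by (intro mult_left_mono) (auto simp: of_nat_diff)
  moreover have "?k * (int m ^ 3 - 2 * int m ^ 2 + 4 * int m - 2)
      = ?k * (2 * (int m * (int m - 1)^2 + int m - 1)) - int m * int m * ?k^2"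
    by (simp add: algebra_simps power2_eq_square power3_eq_cube)
  ultimately show ?thesis
    by linarith
qed

lemma list_colorings_theta_2_2_lower:
  assumes "n \<ge> 2" "even n" "m \<ge> 2"
    and L: "is_m_assignment (theta_verts 2 2 n) m L" and "L TU \<noteq> L TV"
  shows "distinct_ends_count (int m) n * ((int m - 2) * (int m ^ 3 - 2 * int m ^ 2 + 4 * int m - 2))
    \<le> int (num_list_colorings (theta_verts 2 2 n) (theta_edge 2 2 n) L)"
proof -
  let ?D = "distinct_ends_count (int m) n" and ?Ls = "map (L \<circ> TI 2) [1..<n]"
  let ?A = "\<lambda>c d. card (L (TI 0 1) - {c, d}) * card (L (TI 1 1) - {c, d})"
  have V: "\<forall>x\<in>theta_verts 2 2 n. finite (L x) \<and> card (L x) = m"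
    using L by (simp add: is_m_assignment_def)
  then have "\<forall>A\<in>set ?Ls. finite A \<and> card A = m"
    by (auto simp: theta_verts_2_2)
  moreover have "Suc (length ?Ls) = n" "odd (length ?Ls)"
    using assms(1,2) by auto
  ultimately have path: "?D \<le> int (card (path_colorings c d ?Ls))" for c d
    using distinct_ends_count_le_card_path_colorings [OF \<open>m \<ge> 2\<close>] by metis
  have "(int m - 2) * (int m ^ 3 - 2 * int m ^ 2 + 4 * int m - 2)
      \<le> (\<Sum>c\<in>L TU. \<Sum>d\<in>L TV. int (?A c d))"
    using V \<open>m \<ge> 2\<close> \<open>L TU \<noteq> L TV\<close>
    by (intro sum_card_Diff_doubleton_product_lower) (auto simp: theta_verts_2_2)
  then have "?D * ((int m - 2) * (int m ^ 3 - 2 * int m ^ 2 + 4 * int m - 2))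
      \<le> ?D * (\<Sum>c\<in>L TU. \<Sum>d\<in>L TV. int (?A c d))"
    using distinct_ends_count_nonneg \<open>m \<ge> 2\<close> by (intro mult_left_mono) auto
  also have "\<dots> = (\<Sum>c\<in>L TU. \<Sum>d\<in>L TV. int (?A c d) * ?D)"
    by (simp add: sum_distrib_left mult.commute)
  also have "\<dots> \<le> (\<Sum>c\<in>L TU. \<Sum>d\<in>L TV. int (?A c d) * int (card (path_colorings c d ?Ls)))"
    using path by (intro sum_mono mult_left_mono) auto
  also have "\<dots> = int (num_list_colorings (theta_verts 2 2 n) (theta_edge 2 2 n) L)"
    using V assms(1) by (simp add: num_list_colorings_def card_list_colorings_theta_2_2)
  finally show ?thesis .
qed

lemma theta_2_2_count_inequality:
  fixes m D :: int
  assumes "4 \<le> m" "(m - 1)^2 * (m - 2) \<le> D"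
  shows "m * ((m - 1)^2 * (D + 1) + (m - 1) * (m - 2)^2 * D)
    \<le> D * ((m - 2) * (m ^ 3 - 2 * m ^ 2 + 4 * m - 2))"
proof -
  have "0 \<le> (m - 4) * (2 * m + 1)"
    using assms(1) by (intro mult_nonneg_nonneg) auto
  then have "0 \<le> 2 * m^2 - 7 * m + 4"
    by (simp add: algebra_simps power2_eq_square)
  then have "(m - 1)^2 * (m - 2) * (2 * m^2 - 7 * m + 4) \<le> D * (2 * m^2 - 7 * m + 4)"
    using assms(2) by (intro mult_right_mono)
  moreover have "0 \<le> m * (2 * m - 3)"
    using assms(1) by (intro mult_nonneg_nonneg) auto
  then have "0 \<le> 2 * m^2 - 3 * m + 5"
    by (simp add: algebra_simps power2_eq_square)
  then have "0 \<le> (m - 4) * (2 * m^2 - 3 * m + 5)"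
    using assms(1) by simp
  then have "m \<le> (m - 2) * (2 * m^2 - 7 * m + 4)"
    by (simp add: algebra_simps power2_eq_square power3_eq_cube)
  then have "(m - 1)^2 * m \<le> (m - 1)^2 * ((m - 2) * (2 * m^2 - 7 * m + 4))"
    by (intro mult_left_mono) auto
  ultimately show ?thesis
    \<comment> \<open>right-hand side minus left-hand side is \<open>D (2m\<^sup>2 - 7m + 4) - m (m - 1)\<^sup>2\<close>\<close>
    by (simp add: algebra_simps power2_eq_square power3_eq_cube)
qed

theorem lemma24:
  fixes k m :: nat and L :: "tvert \<Rightarrow> 'c set"
  assumes "k \<ge> 2" and "m \<ge> 4"
    and "is_m_assignment (theta_verts 2 2 (2*k)) m L"
    and "L TU \<noteq> L TV"
  shows "num_list_colorings (theta_verts 2 2 (2*k)) (theta_edge 2 2 (2*k)) L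
         \<ge> chrom_poly (theta_verts 2 2 (2*k)) (theta_edge 2 2 (2*k)) m"
proof -
  define n where "n = 2 * k"
  have n: "4 \<le> n" "even n"
    using assms(1) by (auto simp: n_def)
  let ?D = "distinct_ends_count (int m) n"
  have "(int m - 1)^2 * (int m - 2) \<le> ?D"
    using distinct_ends_count_lower [of "int m" 2 n] assms(2) n by simp
  then have "int m * ((int m - 1)^2 * (?D + 1) + (int m - 1) * (int m - 2)^2 * ?D)
      \<le> ?D * ((int m - 2) * (int m ^ 3 - 2 * int m ^ 2 + 4 * int m - 2))"
    using assms(2) by (intro theta_2_2_count_inequality) auto
  also have "\<dots> \<le> int (num_list_colorings (theta_verts 2 2 n) (theta_edge 2 2 n) L)"
    using assms(2-4) n by (intro list_colorings_theta_2_2_lower) (auto simp: n_def)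
  finally show ?thesis
    using chrom_poly_theta_2_2 [of n m] n by (simp add: n_def)
qed

end
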